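(* Consider scheduling on unrelated machines with all jobs available at time $0$, fix $\delta>0$ and $\beta\in(0,1)$, and assume every processing requirement $p_j$ is an integer power of $1+\delta$ and all predictions are underestimates ($\hat p_j\le p_j$). Then the total number of preemptions (including migrations) performed by SNAP with parameters $\beta,\delta$ is at most $$O\Big(\frac{1}{\beta\delta}\sum_j\Big(\log_2\frac{p_j}{\hat p_j}+1\Big)\Big).$$
   Context: Unrelated machines: a set $M$ of machines and $n$ jobs, all available at time $0$. Job $j$ is processed at rate $\lambda_{ij}\ge0$ on machine $i$ (known in advance); each machine processes at most one job at a time and each job runs on at most one machine at a time. Job $j$ has unknown processing requirement $p_j$ (learned at completion) and known prediction $\hat p_j$; it completes once its cumulative processed amount $q_j(t)$ reaches $p_j$. A preemption is an interruption of a job before completion; a migration is resuming a job on a different machine. SNAP with parameters $\beta\in(0,1)$, $\delta>0$ proceeds in epochs $k=1,2,\dots$; epoch $k$ starts at $e_k$ ($e_1=0$). Let $J_k$ be the set of unfinished jobs at $e_k$ and $n_k=|J_k|$. At $e_k$: (1) compute $y^{(k)}$ as an optimal solution of the convex program: maximize $\sum_{j\in J_k}\log y_j$ subject to $\sum_{j\in J_k}x_{ij}\le1$ for all $i\in M$, $\sum_{i\in M}x_{ij}\le1$ and $y_j=\sum_{i\in M}\lambda_{ij}x_{ij}$ for all $j\in J_k$, $x_{ij}\ge0$ (proportional fairness rates). (2) For each $j\in J_k$ let $u_{j,k}=(1+\delta)^{h+1}-q_j(e_k)$, where $h$ is the integer with $(1+\delta)^h\le\max\{\hat p_j,q_j(e_k)\}<(1+\delta)^{h+1}$.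 (3) Sort $J_k$ in non-decreasing order of $u_{j,k}/y^{(k)}_j$; if $j^*$ is the $\lceil\beta n_k\rceil$-th job, set $l_k=u_{j^*,k}/y^{(k)}_{j^*}$ and $v_{j,k}=\min\{u_{j,k},l_ky^{(k)}_j\}$ for $j\in J_k$. (4) Construct and execute a non-preemptive, non-migratory schedule starting at $e_k$ in which each $j\in J_k$ is processed on a single machine in a single contiguous interval and receives exactly $v_{j,k}$ units of processing, finishing by time $e_k+4l_k$ (such a schedule exists and is computed by a known polynomial-time rounding of the fractional assignment $x$); epoch $k$ ends, and epoch $k+1$ begins, when this schedule ends.
   Formalization: For each D > 0 the O-bound holds with a constant depending only on D for all delta in (0,D], and the preemptions counted in epoch k are the jobs of $J_k$ still unfinished when epoch k ends. Apart from conventions, each condition added here is assumed in the paper as well or is needed for the statement above to hold. *)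

theory Defs
  imports Complex_Main "HOL-Library.Multiset"
begin

text \<open>Machines and jobs are natural numbers; M is the finite machine set, J the finite job set.
  lam i j is the rate of job j on machine i, p j the true requirement, ph j the prediction.\<close>

definition feasible_assignment :: "nat set \<Rightarrow> nat set \<Rightarrow> (nat \<Rightarrow> nat \<Rightarrow> real) \<Rightarrow> bool" where
  "feasible_assignment M Jk x \<longleftrightarrow>
     (\<forall>i\<in>M. \<forall>j\<in>Jk. 0 \<le> x i j) \<and>
     (\<forall>i\<in>M. (\<Sum>j\<in>Jk. x i j) \<le> 1) \<and>
     (\<forall>j\<in>Jk. (\<Sum>i\<in>M. x i j) \<le> 1)"

definition rate_of :: "nat set \<Rightarrow> (nat \<Rightarrow> nat \<Rightarrow> real) \<Rightarrow> (nat \<Rightarrow> nat \<Rightarrow> real) \<Rightarrow> nat \<Rightarrow> real" where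
  "rate_of M lam x j = (\<Sum>i\<in>M. lam i j * x i j)"

text \<open>y is an optimal solution (the y-part) of the proportional fairness convex program
  maximize sum of log y_j. Solutions with some y_j <= 0 have objective minus infinity.\<close>
definition PF_rates :: "nat set \<Rightarrow> nat set \<Rightarrow> (nat \<Rightarrow> nat \<Rightarrow> real) \<Rightarrow> (nat \<Rightarrow> real) \<Rightarrow> bool" where
  "PF_rates M Jk lam y \<longleftrightarrow>
     (\<exists>x. feasible_assignment M Jk x \<and> (\<forall>j\<in>Jk. y j = rate_of M lam x j)) \<and>
     (\<forall>j\<in>Jk. 0 < y j) \<and>
     (\<forall>x'. feasible_assignment M Jk x' \<and> (\<forall>j\<in>Jk. 0 < rate_of M lam x' j) \<longrightarrow>
           (\<Sum>j\<in>Jk. ln (rate_of M lam x' j)) \<le> (\<Sum>j\<in>Jk. ln (y j)))"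

definition unfinished :: "nat set \<Rightarrow> (nat \<Rightarrow> real) \<Rightarrow> (nat \<Rightarrow> real) \<Rightarrow> nat set" where
  "unfinished J p q = {j\<in>J. q j < p j}"

definition u_val :: "real \<Rightarrow> (nat \<Rightarrow> real) \<Rightarrow> (nat \<Rightarrow> real) \<Rightarrow> nat \<Rightarrow> real" where
  "u_val \<delta> ph q j =
     (1 + \<delta>) powr (real_of_int (\<lfloor>log (1 + \<delta>) (max (ph j) (q j))\<rfloor> + 1)) - q j"

definition l_val :: "real \<Rightarrow> real \<Rightarrow> (nat \<Rightarrow> real) \<Rightarrow> nat set \<Rightarrow> (nat \<Rightarrow> real) \<Rightarrow> (nat \<Rightarrow> real) \<Rightarrow> real" where
  "l_val \<beta> \<delta> ph Jk q y =
     sorted_list_of_multiset (image_mset (\<lambda>j. u_val \<delta> ph q j / y j) (mset_set Jk))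
       ! (nat \<lceil>\<beta> * real (card Jk)\<rceil> - 1)"

definition v_val :: "real \<Rightarrow> real \<Rightarrow> (nat \<Rightarrow> real) \<Rightarrow> nat set \<Rightarrow> (nat \<Rightarrow> real) \<Rightarrow> (nat \<Rightarrow> real) \<Rightarrow> nat \<Rightarrow> real" where
  "v_val \<beta> \<delta> ph Jk q y j = min (u_val \<delta> ph q j) (l_val \<beta> \<delta> ph Jk q y * y j)"

text \<open>A run of SNAP: qs k = processed amounts q_j(e_k) at the start of epoch k (epochs indexed
  from 0 here), ys k = the proportional fairness rates y^(k). In epoch k every unfinished job j
  is processed in one contiguous interval on one machine for v_{j,k} units, or until it
  completes (its processed amount reaches p_j).\<close>
definition SNAP_run :: "nat set \<Rightarrow> nat set \<Rightarrow> (nat \<Rightarrow> nat \<Rightarrow> real) \<Rightarrow> (nat \<Rightarrow> real) \<Rightarrow> (nat \<Rightarrow> real)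
     \<Rightarrow> real \<Rightarrow> real \<Rightarrow> (nat \<Rightarrow> nat \<Rightarrow> real) \<Rightarrow> (nat \<Rightarrow> nat \<Rightarrow> real) \<Rightarrow> bool" where
  "SNAP_run M J lam p ph \<beta> \<delta> qs ys \<longleftrightarrow>
     qs 0 = (\<lambda>_. 0) \<and>
     (\<forall>k. let Jk = unfinished J p (qs k) in
            PF_rates M Jk lam (ys k) \<and>
            qs (Suc k) = (\<lambda>j. if j \<in> Jk
                               then min (p j) (qs k j + v_val \<beta> \<delta> ph Jk (qs k) (ys k) j)
                               else qs k j))"

text \<open>Preemptions in epoch k: since the schedule inside an epoch is non-preemptive and
  non-migratory, a job is interrupted before completion in epoch k exactly when it is
  unfinished at e_k and does not complete during epoch k (every job of J_k is processed
  in epoch k, as v_{j,k} > 0). Migrations are resumptions after such interruptions.\<close>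
definition preemptions_in_epoch :: "nat set \<Rightarrow> (nat \<Rightarrow> real) \<Rightarrow> (nat \<Rightarrow> real) \<Rightarrow> real \<Rightarrow> real
     \<Rightarrow> (nat \<Rightarrow> nat \<Rightarrow> real) \<Rightarrow> (nat \<Rightarrow> nat \<Rightarrow> real) \<Rightarrow> nat \<Rightarrow> nat" where
  "preemptions_in_epoch J p ph \<beta> \<delta> qs ys k =
     (let Jk = unfinished J p (qs k) in
      card {j\<in>Jk. qs k j + v_val \<beta> \<delta> ph Jk (qs k) (ys k) j < p j})"

end

theory Submission
  imports Defs
begin

(* While job j is unfinished, give it the potential
     floor(log_{1+delta} p_j) - floor(log_{1+delta} max(ph_j, q_j)) + 1 >= 1.
   By the choice of l_k, at least beta n_k jobs of epoch k receive their full u_{j,k}; each of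
   them either completes or reaches the next power of 1 + delta, so the total potential drops by
   at least beta n_k, which dominates beta times the at most n_k preemptions of the epoch.
   Initially job j has potential at most log_{1+delta}(p_j / ph_j) + 2, and
   ln(1 + delta) >= delta / (1 + delta) turns this into O((log_2(p_j / ph_j) + 1) / delta)
   for bounded delta. *)

lemma sorted_nth_le_count:
  fixes xs :: "'a::linorder list"
  assumes "sorted xs" "i < length xs"
  shows "Suc i \<le> length (filter (\<lambda>x. x \<le> xs ! i) xs)"
proof -
  have "{..i} \<subseteq> {t. t < length xs \<and> xs ! t \<le> xs ! i}"
    using assms by (auto simp: sorted_nth_mono)
  then have "card {..i} \<le> card {t. t < length xs \<and> xs ! t \<le> xs ! i}"
    by (intro card_mono) auto
  then show ?thesis by (simp add: length_filter_conv_card)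
qed

lemma sorted_image_mset_nth:
  fixes f :: "'a \<Rightarrow> 'b::linorder"
  assumes "finite A" "i < card A"
  defines "x \<equiv> sorted_list_of_multiset (image_mset f (mset_set A)) ! i"
  shows sorted_image_mset_nth_mem: "x \<in> f ` A"
    and sorted_image_mset_nth_rank: "Suc i \<le> card {a\<in>A. f a \<le> x}"
proof -
  define xs where "xs = sorted_list_of_multiset (image_mset f (mset_set A))"
  have "length xs = card A"
    unfolding xs_def by (metis mset_sorted_list_of_multiset size_image_mset size_mset size_mset_set)
  with assms(2) have i: "i < length xs" by simp
  then show "x \<in> f ` A"
    using assms(1) by (metis nth_mem x_def xs_def set_sorted_list_of_multiset finite_set_mset_mset_set set_image_mset)
  have "card {a\<in>A. f a \<le> x} = size (filter_mset (\<lambda>y. y \<le> x) (image_mset f (mset_set A)))"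
    using assms(1) by (simp add: filter_mset_image_mset filter_mset_mset_set)
  also have "\<dots> = length (filter (\<lambda>y. y \<le> xs ! i) xs)"
    unfolding xs_def x_def by (metis mset_filter mset_sorted_list_of_multiset size_mset)
  finally show "Suc i \<le> card {a\<in>A. f a \<le> x}"
    using sorted_nth_le_count[OF _ i] by (simp add: xs_def)
qed

lemma ceiling_rank_bounds:
  fixes \<beta> :: real
  assumes "0 < \<beta>" "\<beta> \<le> 1" "0 < n"
  shows "nat \<lceil>\<beta> * real n\<rceil> - 1 < n" and "\<beta> * real n \<le> real (Suc (nat \<lceil>\<beta> * real n\<rceil> - 1))"
proof -
  have "1 \<le> \<lceil>\<beta> * real n\<rceil>" "\<lceil>\<beta> * real n\<rceil> \<le> int n"
    using assms by (auto simp: one_le_ceiling ceiling_le_iff mult_le_cancel_right1)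
  then show "nat \<lceil>\<beta> * real n\<rceil> - 1 < n" "\<beta> * real n \<le> real (Suc (nat \<lceil>\<beta> * real n\<rceil> - 1))"
    using le_of_int_ceiling[of "\<beta> * real n"] by linarith+
qed

lemma l_val_quantile:
  fixes \<delta> :: real and ph q y :: "nat \<Rightarrow> real"
  assumes "finite Jk" "Jk \<noteq> {}" "0 < \<beta>" "\<beta> \<le> 1"
  defines "l \<equiv> l_val \<beta> \<delta> ph Jk q y"
  shows l_val_mem: "l \<in> (\<lambda>j. u_val \<delta> ph q j / y j) ` Jk"
    and l_val_rank: "\<beta> * real (card Jk) \<le> real (card {j\<in>Jk. u_val \<delta> ph q j / y j \<le> l})"
proof -
  have n: "0 < card Jk" using assms(1,2) by auto
  note rank = ceiling_rank_bounds[OF assms(3,4) n]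
  show "l \<in> (\<lambda>j. u_val \<delta> ph q j / y j) ` Jk"
    unfolding l_def l_val_def by (rule sorted_image_mset_nth_mem[OF assms(1) rank(1)])
  show "\<beta> * real (card Jk) \<le> real (card {j\<in>Jk. u_val \<delta> ph q j / y j \<le> l})"
    using rank(2) sorted_image_mset_nth_rank[OF assms(1) rank(1), of "\<lambda>j. u_val \<delta> ph q j / y j"]
    unfolding l_def l_val_def by linarith
qed

lemma less_powr_floor_log_add_one:
  fixes b x :: real
  assumes "1 < b" "0 < x"
  shows "x < b powr (of_int (\<lfloor>log b x\<rfloor> + 1))"
proof -
  have "log b x < of_int (\<lfloor>log b x\<rfloor> + 1)" by linarith
  then have "b powr log b x < b powr of_int (\<lfloor>log b x\<rfloor> + 1)"
    using assms(1) by (intro powr_less_mono) auto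
  then show ?thesis using assms by simp
qed

lemma le_floor_log_of_powr_le:
  fixes b x :: real
  assumes "1 < b" "b powr of_int n \<le> x"
  shows "n \<le> \<lfloor>log b x\<rfloor>"
proof -
  have "0 < x" using assms by (smt (verit) powr_gt_zero)
  then have "of_int n \<le> log b x" using assms by (simp add: le_log_iff)
  then show ?thesis by (simp add: le_floor_iff)
qed

lemma floor_log_mono:
  fixes b x y :: real
  assumes "1 < b" "0 < x" "x \<le> y"
  shows "\<lfloor>log b x\<rfloor> \<le> \<lfloor>log b y\<rfloor>"
  using assms by (intro floor_mono) simp

lemma log_le_log2_scaled:
  fixes \<delta> D x :: real
  assumes "0 < \<delta>" "\<delta> \<le> D" "1 \<le> x"
  shows "log (1 + \<delta>) x \<le> (1 + D) / \<delta> * log 2 x"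
proof -
  have ln_base: "\<delta> / (1 + \<delta>) \<le> ln (1 + \<delta>)"
    using ln_add1_ge[of \<delta>] assms(1) by (simp add: add.commute)
  have "0 \<le> ln x" using assms(3) by simp
  have "log (1 + \<delta>) x = ln x / ln (1 + \<delta>)" by (simp add: log_def)
  also have "\<dots> \<le> ln x / (\<delta> / (1 + \<delta>))"
    using \<open>0 \<le> ln x\<close> ln_base assms(1) by (intro divide_left_mono) auto
  also have "\<dots> = (1 + \<delta>) / \<delta> * ln x" by simp
  also have "\<dots> \<le> (1 + D) / \<delta> * log 2 x"
  proof (intro mult_mono divide_right_mono)
    show "ln x \<le> log 2 x"
      using \<open>0 \<le> ln x\<close> ln_2_less_1 by (simp add: log_def le_divide_eq mult_left_le)
  qed (use assms \<open>0 \<le> ln x\<close> in auto)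
  finally show ?thesis .
qed

lemma log_add_two_le_log2_scaled:
  fixes \<delta> D x :: real
  assumes "0 < \<delta>" "\<delta> \<le> D" "1 \<le> x"
  shows "log (1 + \<delta>) x + 2 \<le> (2 + 2 * D) / \<delta> * (log 2 x + 1)"
proof -
  have "0 \<le> log 2 x" using assms(3) by simp
  have "(1 + D) / \<delta> * log 2 x \<le> (2 + 2 * D) / \<delta> * log 2 x"
    using assms \<open>0 \<le> log 2 x\<close> by (intro mult_right_mono divide_right_mono) auto
  moreover have "2 \<le> (2 + 2 * D) / \<delta>" using assms by (simp add: le_divide_eq)
  ultimately show ?thesis
    using log_le_log2_scaled[OF assms] by (simp add: distrib_left)
qed

locale SNAP_execution =
  fixes M J :: "nat set" and lam :: "nat \<Rightarrow> nat \<Rightarrow> real" and p ph :: "nat \<Rightarrow> real"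
    and \<beta> \<delta> :: real and qs ys :: "nat \<Rightarrow> nat \<Rightarrow> real"
  assumes finite_jobs: "finite J"
    and beta_pos: "0 < \<beta>" and beta_le_one: "\<beta> \<le> 1"
    and delta_pos: "0 < \<delta>"
    and prediction_pos: "\<And>j. j \<in> J \<Longrightarrow> 0 < ph j"
    and prediction_le: "\<And>j. j \<in> J \<Longrightarrow> ph j \<le> p j"
    and run: "SNAP_run M J lam p ph \<beta> \<delta> qs ys"
begin

abbreviation active :: "nat \<Rightarrow> nat set" where
  "active k \<equiv> unfinished J p (qs k)"

abbreviation threshold :: "nat \<Rightarrow> real" where
  "threshold k \<equiv> l_val \<beta> \<delta> ph (active k) (qs k) (ys k)"

abbreviation share :: "nat \<Rightarrow> nat \<Rightarrow> real" where
  "share k j \<equiv> v_val \<beta> \<delta> ph (active k) (qs k) (ys k) j"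

definition saturated :: "nat \<Rightarrow> nat set" where
  "saturated k = {j \<in> active k. u_val \<delta> ph (qs k) j / ys k j \<le> threshold k}"

definition level :: "nat \<Rightarrow> nat \<Rightarrow> int" where
  "level k j = \<lfloor>log (1 + \<delta>) (max (ph j) (qs k j))\<rfloor>"

definition top_level :: "nat \<Rightarrow> int" where
  "top_level j = \<lfloor>log (1 + \<delta>) (p j)\<rfloor>"

definition job_potential :: "nat \<Rightarrow> nat \<Rightarrow> real" where
  "job_potential k j = (if j \<in> active k then of_int (top_level j - level k j + 1) else 0)"

definition potential :: "nat \<Rightarrow> real" where
  "potential k = (\<Sum>j\<in>J. job_potential k j)"

lemma base_gt_one: "1 < 1 + \<delta>"
  using delta_pos by simp

lemma processed_0: "qs 0 j = 0"
  using run by (simp add: SNAP_run_def)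

lemma processed_Suc:
  "qs (Suc k) j = (if j \<in> active k then min (p j) (qs k j + share k j) else qs k j)"
  using run by (simp add: SNAP_run_def Let_def)

lemma rates_pos: "j \<in> active k \<Longrightarrow> 0 < ys k j"
  using run by (auto simp: SNAP_run_def Let_def PF_rates_def)

lemma mem_active_iff: "j \<in> active k \<longleftrightarrow> j \<in> J \<and> qs k j < p j"
  by (simp add: unfinished_def)

lemma finite_active: "finite (active k)"
  using finite_jobs by (simp add: unfinished_def)

lemma max_prediction_pos: "j \<in> J \<Longrightarrow> 0 < max (ph j) (qs k j)"
  using prediction_pos by (simp add: less_max_iff_disj)

lemma u_val_eq: "u_val \<delta> ph (qs k) j = (1 + \<delta>) powr of_int (level k j + 1) - qs k j"
  by (simp add: u_val_def level_def)

lemma u_val_pos: "j \<in> J \<Longrightarrow> 0 < u_val \<delta> ph (qs k) j"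
  using less_powr_floor_log_add_one[OF base_gt_one max_prediction_pos]
  by (simp add: u_val_eq level_def)

lemma threshold_pos:
  assumes "active k \<noteq> {}"
  shows "0 < threshold k"
proof -
  obtain j where j: "j \<in> active k" "threshold k = u_val \<delta> ph (qs k) j / ys k j"
    using l_val_mem[OF finite_active assms beta_pos beta_le_one] by blast
  then show ?thesis
    using u_val_pos[of j k] rates_pos[OF j(1)] by (simp add: mem_active_iff)
qed

lemma card_saturated_ge: "\<beta> * real (card (active k)) \<le> real (card (saturated k))"
  using l_val_rank[OF finite_active _ beta_pos beta_le_one] by (cases "active k = {}") (auto simp: saturated_def)

lemma share_nonneg:
  assumes "j \<in> active k"
  shows "0 \<le> share k j"
proof -
  have "0 < threshold k" using assms threshold_pos by blast
  then show ?thesis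
    using u_val_pos[of j k] rates_pos[OF assms] assms by (simp add: v_val_def mem_active_iff)
qed

lemma share_saturated: "j \<in> saturated k \<Longrightarrow> share k j = u_val \<delta> ph (qs k) j"
  using rates_pos by (auto simp: saturated_def v_val_def pos_divide_le_eq)

lemma processed_le: "j \<in> J \<Longrightarrow> qs k j \<le> p j"
proof (induction k)
  case 0
  then show ?case using prediction_pos[of j] prediction_le[of j] by (simp add: processed_0)
next
  case (Suc k)
  then show ?case by (simp add: processed_Suc)
qed

lemma processed_mono: "qs k j \<le> qs (Suc k) j"
  using share_nonneg[of j k] by (auto simp: processed_Suc mem_active_iff)

lemma active_Suc_subset: "active (Suc k) \<subseteq> active k"
  by (auto simp: mem_active_iff processed_Suc split: if_splits)

lemma level_mono: "j \<in> J \<Longrightarrow> level k j \<le> level (Suc k) j"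
  unfolding level_def
  using floor_log_mono[OF base_gt_one max_prediction_pos, of j k "max (ph j) (qs (Suc k) j)"]
    processed_mono[of k j] by (simp add: max.coboundedI2)

lemma level_le_top_level: "j \<in> J \<Longrightarrow> level k j \<le> top_level j"
  unfolding level_def top_level_def
  using floor_log_mono[OF base_gt_one max_prediction_pos, of j k "p j"]
    processed_le[of j k] prediction_le[of j] by simp

lemma saturated_level_up:
  assumes "j \<in> saturated k" "j \<in> active (Suc k)"
  shows "level k j + 1 \<le> level (Suc k) j"
proof -
  have "j \<in> active k" using assms(1) by (simp add: saturated_def)
  with assms(2) have "qs (Suc k) j = qs k j + u_val \<delta> ph (qs k) j"
    by (auto simp: processed_Suc share_saturated[OF assms(1)] mem_active_iff)
  then have "(1 + \<delta>) powr of_int (level k j + 1) \<le> max (ph j) (qs (Suc k) j)"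
    by (simp add: u_val_eq)
  then show ?thesis
    unfolding level_def[of "Suc k"] by (rule le_floor_log_of_powr_le[OF base_gt_one])
qed

lemma job_potential_drop:
  assumes "j \<in> J"
  shows "of_bool (j \<in> saturated k) \<le> job_potential k j - job_potential (Suc k) j"
proof (cases "j \<in> active (Suc k)")
  case True
  then have "j \<in> active k" using active_Suc_subset by blast
  then show ?thesis
    using True saturated_level_up[of j k] level_mono[OF assms, of k] by (auto simp: job_potential_def)
next
  case False
  then show ?thesis
    using level_le_top_level[OF assms, of k] by (auto simp: job_potential_def saturated_def)
qed

lemma card_saturated_le_potential_drop: "real (card (saturated k)) \<le> potential k - potential (Suc k)"
proof -
  have "saturated k \<subseteq> J" by (auto simp: saturated_def mem_active_iff)
  then have "real (card (saturated k)) = (\<Sum>j\<in>J. of_bool (j \<in> saturated k))"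
    using finite_jobs by (simp add: Int_absorb1)
  also have "\<dots> \<le> (\<Sum>j\<in>J. job_potential k j - job_potential (Suc k) j)"
    by (intro sum_mono job_potential_drop)
  also have "\<dots> = potential k - potential (Suc k)"
    by (simp add: potential_def sum_subtractf)
  finally show ?thesis .
qed

lemma preemptions_le_potential_drop:
  "\<beta> * real (preemptions_in_epoch J p ph \<beta> \<delta> qs ys k) \<le> potential k - potential (Suc k)"
proof -
  have "preemptions_in_epoch J p ph \<beta> \<delta> qs ys k \<le> card (active k)"
    unfolding preemptions_in_epoch_def Let_def by (intro card_mono finite_active) auto
  then have "\<beta> * real (preemptions_in_epoch J p ph \<beta> \<delta> qs ys k) \<le> \<beta> * real (card (active k))"
    using beta_pos by simp
  also have "\<dots> \<le> potential k - potential (Suc k)"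
    using card_saturated_ge card_saturated_le_potential_drop by (rule order_trans)
  finally show ?thesis .
qed

lemma potential_nonneg: "0 \<le> potential k"
  unfolding potential_def job_potential_def
  using level_le_top_level by (intro sum_nonneg) (simp add: mem_active_iff)

lemma potential_0_le: "potential 0 \<le> (\<Sum>j\<in>J. log (1 + \<delta>) (p j / ph j) + 2)"
  unfolding potential_def
proof (intro sum_mono)
  fix j assume "j \<in> J"
  then have ph: "0 < ph j" "ph j \<le> p j" using prediction_pos prediction_le by auto
  then have "job_potential 0 j = of_int (top_level j - \<lfloor>log (1 + \<delta>) (ph j)\<rfloor> + 1)"
    using \<open>j \<in> J\<close> by (simp add: job_potential_def level_def mem_active_iff processed_0)
  also have "\<dots> \<le> log (1 + \<delta>) (p j) - log (1 + \<delta>) (ph j) + 2"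
    unfolding top_level_def by linarith
  also have "\<dots> = log (1 + \<delta>) (p j / ph j) + 2"
    using ph delta_pos by (simp add: log_divide)
  finally show "job_potential 0 j \<le> log (1 + \<delta>) (p j / ph j) + 2" .
qed

lemma preemptions_le_log_ratio:
  "\<beta> * real (\<Sum>k<N. preemptions_in_epoch J p ph \<beta> \<delta> qs ys k)
     \<le> (\<Sum>j\<in>J. log (1 + \<delta>) (p j / ph j) + 2)"
proof -
  have "\<beta> * real (\<Sum>k<N. preemptions_in_epoch J p ph \<beta> \<delta> qs ys k)
      = (\<Sum>k<N. \<beta> * real (preemptions_in_epoch J p ph \<beta> \<delta> qs ys k))"
    by (simp add: sum_distrib_left)
  also have "\<dots> \<le> (\<Sum>k<N. potential k - potential (Suc k))"
    by (intro sum_mono preemptions_le_potential_drop)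
  also have "\<dots> = potential 0 - potential N"
    by (rule sum_lessThan_telescope')
  also have "\<dots> \<le> (\<Sum>j\<in>J. log (1 + \<delta>) (p j / ph j) + 2)"
    using potential_0_le potential_nonneg[of N] by linarith
  finally show ?thesis .
qed

lemma preemptions_le_log2_ratio:
  assumes "\<delta> \<le> D"
  shows "real (\<Sum>k<N. preemptions_in_epoch J p ph \<beta> \<delta> qs ys k)
     \<le> (2 + 2 * D) * (1 / (\<beta> * \<delta>)) * (\<Sum>j\<in>J. log 2 (p j / ph j) + 1)"
proof -
  have "(\<Sum>j\<in>J. log (1 + \<delta>) (p j / ph j) + 2) \<le> (\<Sum>j\<in>J. (2 + 2 * D) / \<delta> * (log 2 (p j / ph j) + 1))"
    using prediction_pos prediction_le
    by (intro sum_mono log_add_two_le_log2_scaled[OF delta_pos assms]) simp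
  with preemptions_le_log_ratio[of N]
  have "\<beta> * real (\<Sum>k<N. preemptions_in_epoch J p ph \<beta> \<delta> qs ys k)
      \<le> (2 + 2 * D) / \<delta> * (\<Sum>j\<in>J. log 2 (p j / ph j) + 1)"
    by (simp add: sum_distrib_left)
  then show ?thesis
    using beta_pos delta_pos by (simp add: field_simps)
qed

end

theorem mainTheorem6:
  shows "\<forall>D>0. \<exists>C::real. \<forall>(M::nat set) (J::nat set) (lam::nat \<Rightarrow> nat \<Rightarrow> real)
            (p::nat \<Rightarrow> real) (ph::nat \<Rightarrow> real) (\<beta>::real) (\<delta>::real)
            (qs::nat \<Rightarrow> nat \<Rightarrow> real) (ys::nat \<Rightarrow> nat \<Rightarrow> real) (N::nat).
     finite M \<and> M \<noteq> {} \<and> finite J \<and>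
     (\<forall>i j. 0 \<le> lam i j) \<and> (\<forall>j\<in>J. \<exists>i\<in>M. 0 < lam i j) \<and>
     0 < \<beta> \<and> \<beta> < 1 \<and> 0 < \<delta> \<and> \<delta> \<le> D \<and>
     (\<forall>j\<in>J. \<exists>h::int. p j = (1 + \<delta>) powi h) \<and>
     (\<forall>j\<in>J. 0 < ph j \<and> ph j \<le> p j) \<and>
     SNAP_run M J lam p ph \<beta> \<delta> qs ys
     \<longrightarrow> real (\<Sum>k<N. preemptions_in_epoch J p ph \<beta> \<delta> qs ys k)
         \<le> C * (1 / (\<beta> * \<delta>)) * (\<Sum>j\<in>J. log 2 (p j / ph j) + 1)"
  \<comment> \<open>C = 2 + 2 D.\<close>
  by (blast intro: SNAP_execution.preemptions_le_log2_ratio SNAP_execution.intro less_imp_le)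

end
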